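(* Suppose that Assumptions (A1)–(A4) hold. Then there is a constant $C>0$ depending only on $\alpha$, $\gamma$, the constants in (A1) and (A2), and $\|V\|_{C^2}$ (independent of $\epsilon\in(0,1]$) such that for every solution $(u,m)$ of Problem 1, each of the functions $u$, $u_x$, $m$, $m_x$ has $L^\infty(\mathbb{T})$-norm at most $C/\sqrt{\epsilon}$ and satisfies $|w(x)-w(y)|\le \frac{C}{\sqrt\epsilon}|x-y|^{1/2}$ for all $x,y\in\mathbb{T}$ (where $|x-y|$ is the distance on $\mathbb{T}$). The same holds, with the same constant, if $V$ is replaced by $\lambda V$ for any $\lambda\in[0,1]$.
   Context: Let $\mathbb{T}=\mathbb{R}/\mathbb{Z}$ be the one-dimensional torus; functions on $\mathbb{T}$ are identified with $1$-periodic functions on $\mathbb{R}$. Let $H:\mathbb{R}\to\mathbb{R}$ be of class $C^2$, $V:\mathbb{T}\to\mathbb{R}$ continuous, $\alpha>0$, and $0<\epsilon\le 1$. We say $(u,m)$ solves Problem 1 if $u,m\in C^2(\mathbb{T})$, $m>0$ on $\mathbb{T}$, and on $\mathbb{T}$: $$u-u_{xx}+H(u_x)+V(x)=m^\alpha+\epsilon(m-m_{xx}),\qquad m-m_{xx}-(H'(u_x)m)_x=1-\epsilon(u-u_{xx}).$$ Assumptions: (A1) there exist constants $C_1,C_2,C_3>0$ and $\gamma>1$ such that $-C_1+C_2|p|^\gamma\le H(p)\le C_1+C_3|p|^\gamma$ for all $p\in\mathbb{R}$. (A2) There exist constants $\tilde C_1,\tilde C_2,\tilde C_3>0$ such that $-\tilde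 C_1+\tilde C_2|p|^\gamma\le pH'(p)-H(p)\le \tilde C_1+\tilde C_3|p|^\gamma$ for all $p$ (same $\gamma$ as in (A1)). (A3) $V$ is of class $C^2$. (A4) $H$ is convex. *)

theory Defs
  imports "HOL-Analysis.Analysis"
begin

text \<open>Functions on the torus R/Z are identified with 1-periodic functions on R.\<close>
definition periodic1 :: "(real \<Rightarrow> real) \<Rightarrow> bool" where
  "periodic1 f \<longleftrightarrow> (\<forall>x. f (x + 1) = f x)"

definition C2 :: "(real \<Rightarrow> real) \<Rightarrow> bool" where
  "C2 f \<longleftrightarrow> (\<exists>f' f''. (\<forall>x. (f has_real_derivative f' x) (at x)) \<and>
                        (\<forall>x. (f' has_real_derivative f'' x) (at x)) \<and>
                        continuous_on UNIV f'')"

definition c2norm :: "(real \<Rightarrow> real) \<Rightarrow> real" where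
  "c2norm V = (SUP x. \<bar>V x\<bar>) + (SUP x. \<bar>deriv V x\<bar>) + (SUP x. \<bar>deriv (deriv V) x\<bar>)"

definition tdist :: "real \<Rightarrow> real \<Rightarrow> real" where
  "tdist x y = (INF k::int. \<bar>x - y - of_int k\<bar>)"

definition solves_P1 ::
  "(real \<Rightarrow> real) \<Rightarrow> (real \<Rightarrow> real) \<Rightarrow> real \<Rightarrow> real \<Rightarrow> (real \<Rightarrow> real) \<Rightarrow> (real \<Rightarrow> real) \<Rightarrow> bool" where
  "solves_P1 H V \<alpha> \<epsilon> u m \<longleftrightarrow>
     periodic1 u \<and> periodic1 m \<and> C2 u \<and> C2 m \<and> (\<forall>x. m x > 0) \<and>
     (\<forall>x. u x - deriv (deriv u) x + H (deriv u x) + V x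
            = m x powr \<alpha> + \<epsilon> * (m x - deriv (deriv m) x)) \<and>
     (\<forall>x. m x - deriv (deriv m) x - deriv (\<lambda>y. deriv H (deriv u y) * m y) x
            = 1 - \<epsilon> * (u x - deriv (deriv u) x))"

end

theory Submission
  imports Defs "HOL-Library.Periodic_Fun"
begin

text \<open>Testing the two equations against \<open>(m - 1, u)\<close> and against \<open>(m_xx, u_xx)\<close> and
  integrating by parts over a period gives two integral identities. In the first, the lower
  bounds on \<open>H(p)\<close> and \<open>p H'(p) - H(p)\<close>, together with the superlinear growth of
  \<open>m^(\<alpha>+1)\<close>, bound \<open>\<epsilon>\<close> times the squared \<open>L\<^sup>2\<close> norms of \<open>u, u_x, m, m_x\<close> and the mean
  of \<open>m\<close>; in the second, convexity of \<open>H\<close> bounds \<open>\<epsilon>\<close> times those of \<open>u_xx, m_xx\<close> by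
  \<open>sup |V''|\<close> times the mean of \<open>m\<close>. The one-dimensional Sobolev inequality
  \<open>|w(x) - w(y)|\<^sup>2 \<le> 2 |x - y| \<parallel>w'\<parallel>\<^sup>2\<close> for periodic \<open>w\<close> turns these \<open>O(1/\<epsilon>)\<close> bounds
  into the uniform and \<open>1/2\<close>-Hoelder bounds.\<close>

section \<open>Periodic functions and convexity\<close>

lemma C2_obtain_derivatives:
  assumes "C2 f"
  obtains f1 f2 where "\<And>x. (f has_real_derivative f1 x) (at x)"
    "\<And>x. (f1 has_real_derivative f2 x) (at x)" "continuous_on UNIV f2"
    "deriv f = f1" "deriv f1 = f2"
proof -
  from assms obtain f1 f2 where d1: "\<forall>x. (f has_real_derivative f1 x) (at x)"
    and d2: "\<forall>x. (f1 has_real_derivative f2 x) (at x)" and "continuous_on UNIV f2"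
    unfolding C2_def by blast
  moreover have "deriv f = f1" "deriv f1 = f2"
    using d1 d2 by (auto intro!: ext DERIV_imp_deriv)
  ultimately show ?thesis using that by blast
qed

lemma C2_scale:
  assumes "C2 f"
  shows "C2 (\<lambda>x. c * f x)" and "deriv (deriv (\<lambda>x. c * f x)) x = c * deriv (deriv f) x"
proof -
  obtain f1 f2 where d1: "\<And>x. (f has_real_derivative f1 x) (at x)"
    and d2: "\<And>x. (f1 has_real_derivative f2 x) (at x)" and c2: "continuous_on UNIV f2"
    and e: "deriv f = f1" "deriv f1 = f2"
    using C2_obtain_derivatives[OF assms] by metis
  have dc1: "((\<lambda>x. c * f x) has_real_derivative c * f1 x) (at x)"
    and dc2: "((\<lambda>x. c * f1 x) has_real_derivative c * f2 x) (at x)" for x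
    using d1 d2 by (auto intro!: derivative_eq_intros)
  have "continuous_on UNIV (\<lambda>x. c * f2 x)"
    using c2 by (intro continuous_intros)
  with dc1 dc2 show "C2 (\<lambda>x. c * f x)"
    unfolding C2_def by (intro exI[of _ "\<lambda>x. c * f1 x"] exI[of _ "\<lambda>x. c * f2 x"]) blast
  have "deriv (\<lambda>x. c * f x) = (\<lambda>x. c * f1 x)" "deriv (\<lambda>x. c * f1 x) = (\<lambda>x. c * f2 x)"
    using dc1 dc2 by (auto intro!: ext DERIV_imp_deriv)
  then show "deriv (deriv (\<lambda>x. c * f x)) x = c * deriv (deriv f) x"
    by (simp add: e)
qed

lemma periodic1_shift_int:
  assumes "periodic1 f"
  shows "f (x + of_int k) = f x"
proof -
  interpret periodic_fun_simple' f
    using assms by unfold_locales (simp add: periodic1_def)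
  show ?thesis by (rule plus_of_int)
qed

lemma periodic1_derivative:
  assumes "periodic1 f" and d: "\<And>x. (f has_real_derivative f' x) (at x)"
  shows "periodic1 f'"
  unfolding periodic1_def
proof
  fix x
  have "((\<lambda>y. f (y + 1)) has_real_derivative f' (x + 1) * 1) (at x)"
    by (rule DERIV_chain2[OF d]) (auto intro!: derivative_eq_intros)
  moreover have "(\<lambda>y. f (y + 1)) = f"
    using assms by (auto simp: periodic1_def)
  ultimately show "f' (x + 1) = f' x"
    using d[of x] DERIV_unique by fastforce
qed

lemma periodic1_abs_le_SUP:
  fixes f :: "real \<Rightarrow> real"
  assumes "periodic1 f" and "continuous_on UNIV f"
  shows "\<bar>f x\<bar> \<le> (SUP y. \<bar>f y\<bar>)"
proof (rule cSUP_upper)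
  have "bounded (f ` {0..1})"
    by (intro compact_imp_bounded compact_continuous_image continuous_on_subset[OF assms(2)]
        compact_Icc subset_UNIV)
  then obtain B where B: "\<And>y. y \<in> f ` {0..1} \<Longrightarrow> \<bar>y\<bar> \<le> B"
    unfolding bounded_real by blast
  have "\<bar>f y\<bar> \<le> B" for y
  proof -
    have "y - of_int \<lfloor>y\<rfloor> \<in> {0..1}"
      using of_int_floor_le[of y] real_of_int_floor_add_one_gt[of y]
      unfolding atLeastAtMost_iff by linarith
    then have "\<bar>f (y - of_int \<lfloor>y\<rfloor>)\<bar> \<le> B"
      using B by blast
    moreover have "f (y - of_int \<lfloor>y\<rfloor>) = f y"
      using periodic1_shift_int[OF assms(1), of y "- \<lfloor>y\<rfloor>"] by simp
    ultimately show ?thesis by simp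
  qed
  then show "bdd_above (range (\<lambda>y. \<bar>f y\<bar>))" by (meson bdd_aboveI2)
qed simp

lemma abs_le_c2norm:
  assumes "periodic1 V" and "C2 V"
  shows "\<bar>V x\<bar> \<le> c2norm V" and "\<bar>deriv (deriv V) x\<bar> \<le> c2norm V"
proof -
  obtain v1 v2 where d1: "\<And>x. (V has_real_derivative v1 x) (at x)"
    and d2: "\<And>x. (v1 has_real_derivative v2 x) (at x)" and c2: "continuous_on UNIV v2"
    and e: "deriv V = v1" "deriv v1 = v2"
    using C2_obtain_derivatives[OF assms(2)] by metis
  have p1: "periodic1 v1" and p2: "periodic1 v2"
    using periodic1_derivative assms(1) d1 d2 by blast+
  have c: "continuous_on UNIV V" "continuous_on UNIV v1"
    using d1 d2 by (auto intro: DERIV_continuous_on)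
  have le: "\<bar>V y\<bar> \<le> (SUP y. \<bar>V y\<bar>)" "\<bar>v1 y\<bar> \<le> (SUP y. \<bar>v1 y\<bar>)"
    "\<bar>v2 y\<bar> \<le> (SUP y. \<bar>v2 y\<bar>)" for y
    using periodic1_abs_le_SUP assms(1) p1 p2 c c2 by blast+
  have "0 \<le> (SUP y. \<bar>V y\<bar>)" "0 \<le> (SUP y. \<bar>v1 y\<bar>)" "0 \<le> (SUP y. \<bar>v2 y\<bar>)"
    using le[of 0] by linarith+
  then show "\<bar>V x\<bar> \<le> c2norm V" and "\<bar>deriv (deriv V) x\<bar> \<le> c2norm V"
    using le[of x] unfolding c2norm_def e by linarith+
qed

lemma tdist_nonneg: "0 \<le> tdist x y"
  unfolding tdist_def by (rule cINF_greatest) auto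

lemma tdist_le_1: "tdist x y \<le> 1"
proof -
  have "tdist x y \<le> \<bar>x - y - of_int \<lfloor>x - y\<rfloor>\<bar>"
    unfolding tdist_def by (rule cINF_lower) (auto intro: bdd_belowI[of _ 0])
  also have "\<dots> \<le> 1"
    using of_int_floor_le[of "x - y"] real_of_int_floor_add_one_gt[of "x - y"] by linarith
  finally show ?thesis .
qed

lemma convex_imp_derivative_mono:
  fixes H :: "real \<Rightarrow> real"
  assumes "convex_on UNIV H" and "\<And>p. (H has_real_derivative h p) (at p)"
  shows "mono h"
proof
  fix p q :: real assume "p \<le> q"
  have "H q - H p \<ge> h p * (q - p)" "H p - H q \<ge> h q * (p - q)"
    by (rule convex_on_imp_above_tangent[OF assms(1) connected_UNIV _ _ assms(2)]; simp)+
  then have "0 \<le> (h q - h p) * (q - p)" by argo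
  show "h p \<le> h q"
  proof (cases "p = q")
    case False
    with \<open>p \<le> q\<close> have "q - p > 0" by simp
    with \<open>0 \<le> (h q - h p) * (q - p)\<close> show ?thesis
      by (simp add: zero_le_mult_iff)
  qed simp
qed

lemma convex_imp_second_derivative_nonneg:
  fixes H :: "real \<Rightarrow> real"
  assumes "convex_on UNIV H" and "\<And>p. (H has_real_derivative h1 p) (at p)"
    and "\<And>p. (h1 has_real_derivative h2 p) (at p)"
  shows "h2 p \<ge> 0"
proof (rule ccontr)
  assume "\<not> h2 p \<ge> 0"
  then obtain d where "d > 0" "\<forall>t > 0. t < d \<longrightarrow> h1 p > h1 (p + t)"
    using DERIV_neg_dec_right[OF assms(3), of p] by force
  then have "h1 p > h1 (p + d / 2)" by simp
  moreover have "h1 p \<le> h1 (p + d / 2)"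
    using monoD[OF convex_imp_derivative_mono[OF assms(1,2)]] \<open>d > 0\<close> by simp
  ultimately show False by simp
qed

section \<open>Sobolev inequality on the torus\<close>

lemma sq_increment_le_integral_sq_derivative:
  fixes w w' :: "real \<Rightarrow> real"
  assumes "a \<le> b" and d: "\<And>x. (w has_real_derivative w' x) (at x)"
    and c: "continuous_on {a..b} w'"
  shows "(w b - w a)^2 \<le> (b - a) * integral {a..b} (\<lambda>x. (w' x)^2)"
proof (cases "a = b")
  case False
  with \<open>a \<le> b\<close> have "b - a > 0" by simp
  define D L I where "D = w b - w a" and "L = b - a"
    and "I = integral {a..b} (\<lambda>x. (w' x)^2)"
  have "(w' has_integral D) {a..b}"
    using fundamental_theorem_of_calculus[OF \<open>a \<le> b\<close>, of w w'] d unfolding D_def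
    by (auto simp: has_real_derivative_iff_has_vector_derivative[symmetric]
        intro: has_field_derivative_at_within)
  moreover have "((\<lambda>x. (w' x)^2) has_integral I) {a..b}"
    unfolding I_def using c
    by (intro integrable_integral integrable_continuous_interval continuous_intros)
  moreover have "((\<lambda>x. D^2) has_integral D^2 * L) {a..b}"
    using has_integral_const_real[of "D^2" a b] \<open>a \<le> b\<close> by (simp add: L_def mult.commute)
  ultimately have "((\<lambda>x. L^2 * (w' x)^2 - 2 * L * D * w' x + D^2) has_integral
      L^2 * I - 2 * L * D * D + D^2 * L) {a..b}"
    by (intro has_integral_add has_integral_diff has_integral_mult_right)
  then have "0 \<le> L^2 * I - 2 * L * D * D + D^2 * L"
  proof (rule has_integral_nonneg)
    show "0 \<le> L^2 * (w' x)^2 - 2 * L * D * w' x + D^2" for x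
      using zero_le_power2[of "L * w' x - D"] by (simp add: power2_diff algebra_simps)
  qed
  then have "0 \<le> L * (L * I - D^2)"
    by (simp add: power2_eq_square algebra_simps)
  with \<open>b - a > 0\<close> show ?thesis
    by (simp add: D_def L_def I_def zero_le_mult_iff)
qed simp

lemma periodic1_integral_two_periods:
  fixes g :: "real \<Rightarrow> real"
  assumes "periodic1 g" and "continuous_on UNIV g"
  shows "integral {0..2} g = 2 * integral {0..1} g"
proof -
  have "integral {1..2} g = integral {0..1} (g \<circ> (+) 1)"
    using integral_shift_Icc_real[of 0 1 g 1] by simp
  also have "\<dots> = integral {0..1} g"
    using assms(1) by (simp add: o_def add.commute periodic1_def)
  finally have "integral {1..2} g = integral {0..1} g" .
  moreover have "integral {0..1} g + integral {1..2} g = integral {0..2} g"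
    by (rule Henstock_Kurzweil_Integration.integral_combine)
      (auto intro: integrable_continuous_interval continuous_on_subset[OF assms(2)])
  ultimately show ?thesis by simp
qed

lemma periodic1_sq_increment_le:
  fixes w w' :: "real \<Rightarrow> real"
  assumes p: "periodic1 w" and d: "\<And>x. (w has_real_derivative w' x) (at x)"
    and c: "continuous_on UNIV w'"
  defines "I \<equiv> integral {0..1} (\<lambda>t. (w' t)^2)"
  shows "(w y - w x)^2 \<le> 2 * I * \<bar>y - x\<bar>"
proof -
  have c2: "continuous_on S (\<lambda>t. (w' t)^2)" for S
    by (intro continuous_intros continuous_on_subset[OF c]) auto
  have "I \<ge> 0"
    unfolding I_def by (intro integral_nonneg integrable_continuous_interval c2) auto
  have "integral {0..2} (\<lambda>t. (w' t)^2) = 2 * I"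
    unfolding I_def
    by (intro periodic1_integral_two_periods c2)
      (use periodic1_derivative[OF p d] in \<open>simp add: periodic1_def\<close>)
  then have in_0_2: "(w b - w a)^2 \<le> 2 * I * (b - a)" if "0 \<le> a" "a \<le> b" "b \<le> 2" for a b
  proof -
    have "integral {a..b} (\<lambda>t. (w' t)^2) \<le> integral {0..2} (\<lambda>t. (w' t)^2)"
      using that by (intro integral_subset_le integrable_continuous_interval c2) auto
    then have "(b - a) * integral {a..b} (\<lambda>t. (w' t)^2) \<le> (b - a) * (2 * I)"
      using \<open>integral {0..2} _ = 2 * I\<close> \<open>a \<le> b\<close> by (intro mult_left_mono) auto
    then show ?thesis
      using sq_increment_le_integral_sq_derivative[OF \<open>a \<le> b\<close> d continuous_on_subset[OF c]] by (simp add: mult.commute)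
  qed
  have short: "(w y - w x)^2 \<le> 2 * I * (y - x)" if "x \<le> y" "y \<le> x + 1" for x y
  proof -
    have "w (x - of_int \<lfloor>x\<rfloor>) = w x" "w (y - of_int \<lfloor>x\<rfloor>) = w y"
      using periodic1_shift_int[OF p, of _ "- \<lfloor>x\<rfloor>"] by simp_all
    moreover have "0 \<le> x - of_int \<lfloor>x\<rfloor>" "y - of_int \<lfloor>x\<rfloor> \<le> 2"
      using of_int_floor_le[of x] real_of_int_floor_add_one_gt[of x] that by linarith+
    ultimately show ?thesis
      using in_0_2[of "x - of_int \<lfloor>x\<rfloor>" "y - of_int \<lfloor>x\<rfloor>"] that by simp
  qed
  have ordered: "(w y - w x)^2 \<le> 2 * I * (y - x)" if "x \<le> y" for x y
  proof -
    define y' where "y' = y - of_int \<lfloor>y - x\<rfloor>"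
    have "w y' = w y"
      using periodic1_shift_int[OF p, of y "- \<lfloor>y - x\<rfloor>"] by (simp add: y'_def)
    moreover have "(0::real) \<le> of_int \<lfloor>y - x\<rfloor>"
      using that by simp
    then have "x \<le> y'" "y' \<le> x + 1" "y' \<le> y"
      using of_int_floor_le[of "y - x"] real_of_int_floor_add_one_gt[of "y - x"]
      unfolding y'_def by linarith+
    ultimately show ?thesis
      using short[of x y'] mult_left_mono[of "y' - x" "y - x" "2 * I"] \<open>I \<ge> 0\<close> by simp
  qed
  show ?thesis
    using ordered[of x y] ordered[of y x] by (cases "x \<le> y") (simp_all add: power2_commute)
qed

lemma periodic1_holder_half:
  fixes w w' :: "real \<Rightarrow> real"
  assumes p: "periodic1 w" and d: "\<And>x. (w has_real_derivative w' x) (at x)"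
    and c: "continuous_on UNIV w'"
  defines "I \<equiv> integral {0..1} (\<lambda>t. (w' t)^2)"
  shows "\<bar>w x - w y\<bar> \<le> sqrt (2 * I) * sqrt (tdist x y)"
proof -
  have shifted: "(w x - w y)^2 \<le> 2 * I * \<bar>x - y - of_int k\<bar>" for k
    using periodic1_sq_increment_le[OF p d c, of x "y + of_int k"]
      periodic1_shift_int[OF p, of y k]
    by (simp add: I_def power2_commute algebra_simps)
  have "(w x - w y)^2 \<le> 2 * I * tdist x y"
  proof (cases "I = 0")
    case True
    then show ?thesis using shifted[of 0] by simp
  next
    case False
    have "I \<ge> 0"
      unfolding I_def by (intro integral_nonneg integrable_continuous_interval
          continuous_intros continuous_on_subset[OF c]) auto
    with False have "I > 0" by simp
    have "(w x - w y)^2 / (2 * I) \<le> tdist x y"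
      unfolding tdist_def
    proof (rule cINF_greatest)
      show "(w x - w y)^2 / (2 * I) \<le> \<bar>x - y - of_int k\<bar>" for k
        using shifted[of k] \<open>I > 0\<close> by (simp add: divide_le_eq mult.commute)
    qed simp
    then show ?thesis
      using \<open>I > 0\<close> by (simp add: divide_le_eq mult.commute)
  qed
  then have "sqrt ((w x - w y)^2) \<le> sqrt (2 * I * tdist x y)"
    by (rule real_sqrt_le_mono)
  then show ?thesis by (simp add: real_sqrt_mult)
qed

lemma periodic1_sobolev_bounds:
  fixes w w' :: "real \<Rightarrow> real"
  assumes p: "periodic1 w" and d: "\<And>x. (w has_real_derivative w' x) (at x)"
    and c: "continuous_on UNIV w'"
    and A0: "integral {0..1} (\<lambda>t. (w t)^2) \<le> A"
    and A1: "integral {0..1} (\<lambda>t. (w' t)^2) \<le> A"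
  shows "\<bar>w x - w y\<bar> \<le> 3 * sqrt A * sqrt (tdist x y)" and "\<bar>w x\<bar> \<le> 3 * sqrt A"
proof -
  have "0 \<le> integral {0..1} (\<lambda>t. (w' t)^2)"
    by (intro integral_nonneg integrable_continuous_interval continuous_intros
        continuous_on_subset[OF c]) auto
  with A1 have "A \<ge> 0" by simp
  have "sqrt (2 * integral {0..1} (\<lambda>t. (w' t)^2)) \<le> sqrt (2 * A)"
    using A1 by simp
  also have "\<dots> = sqrt 2 * sqrt A"
    by (simp add: real_sqrt_mult)
  also have "\<dots> \<le> 2 * sqrt A"
    using real_sqrt_le_mono[of 2 4] \<open>A \<ge> 0\<close> by (intro mult_right_mono) simp_all
  finally have "sqrt (2 * integral {0..1} (\<lambda>t. (w' t)^2)) \<le> 2 * sqrt A" .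
  then have holder: "\<bar>w x - w y\<bar> \<le> 2 * sqrt A * sqrt (tdist x y)" for x y
    using order_trans[OF periodic1_holder_half[OF p d c] mult_right_mono] tdist_nonneg
    by simp
  have cw: "continuous_on {0..1} (\<lambda>t. (w t)^2)"
    using d by (intro continuous_intros DERIV_continuous_on)
      (auto intro: has_field_derivative_at_within)
  obtain y0 where y0: "\<forall>y \<in> {0..1}. (w y0)^2 \<le> (w y)^2"
    using continuous_attains_inf[OF compact_Icc _ cw] by auto
  have "(w y0)^2 = integral {0..1} (\<lambda>_::real. (w y0)^2)" by simp
  also have "\<dots> \<le> integral {0..1} (\<lambda>t. (w t)^2)"
    using y0 by (intro integral_le integrable_continuous_interval cw) auto
  finally have "sqrt ((w y0)^2) \<le> sqrt A"
    using A0 by (intro real_sqrt_le_mono) simp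
  then have "\<bar>w y0\<bar> \<le> sqrt A" by simp
  moreover have "sqrt A \<ge> 0" "sqrt (tdist x y0) \<le> 1"
    using \<open>A \<ge> 0\<close> tdist_le_1[of x y0] by auto
  ultimately have "\<bar>w x\<bar> \<le> sqrt A + 2 * sqrt A"
    using holder[of x y0] mult_left_le[of "sqrt (tdist x y0)" "2 * sqrt A"] by linarith
  then show "\<bar>w x\<bar> \<le> 3 * sqrt A" by simp
  show "\<bar>w x - w y\<bar> \<le> 3 * sqrt A * sqrt (tdist x y)"
    using order_trans[OF holder mult_right_mono] \<open>sqrt A \<ge> 0\<close> tdist_nonneg by simp
qed

section \<open>Energy estimates\<close>

lemma periodic1_has_integral_derivative:
  assumes "periodic1 P" and "\<And>x. (P has_real_derivative P' x) (at x)"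
  shows "(P' has_integral 0) {0..1}"
proof -
  have "(P' has_integral P 1 - P 0) {0..1}"
    using assms(2) by (intro fundamental_theorem_of_calculus)
      (auto simp: has_real_derivative_iff_has_vector_derivative[symmetric]
        intro: has_field_derivative_at_within)
  moreover have "P 1 = P 0"
    using assms(1) unfolding periodic1_def by (metis add_0)
  ultimately show ?thesis by simp
qed

lemma continuous_on_UNIV_integrable_Icc:
  fixes f :: "real \<Rightarrow> real"
  assumes "continuous_on UNIV f"
  shows "f integrable_on {a..b}"
  by (rule integrable_continuous_interval[OF continuous_on_subset[OF assms subset_UNIV]])

locale P1_solution =
  fixes H h1 h2 W w1 w2 u u1 u2 m m1 m2 :: "real \<Rightarrow> real" and \<alpha> \<epsilon> :: real
  assumes H_deriv: "\<And>p. (H has_real_derivative h1 p) (at p)"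
    and h1_deriv: "\<And>p. (h1 has_real_derivative h2 p) (at p)"
    and h2_nonneg: "\<And>p. h2 p \<ge> 0"
    and W_deriv: "\<And>x. (W has_real_derivative w1 x) (at x)"
    and w1_deriv: "\<And>x. (w1 has_real_derivative w2 x) (at x)"
    and u_deriv: "\<And>x. (u has_real_derivative u1 x) (at x)"
    and u1_deriv: "\<And>x. (u1 has_real_derivative u2 x) (at x)"
    and u2_cont: "continuous_on UNIV u2"
    and m_deriv: "\<And>x. (m has_real_derivative m1 x) (at x)"
    and m1_deriv: "\<And>x. (m1 has_real_derivative m2 x) (at x)"
    and m2_cont: "continuous_on UNIV m2"
    and periodic: "periodic1 u" "periodic1 m" "periodic1 W"
    and m_pos: "\<And>x. m x > 0"
    and eps: "0 < \<epsilon>" "\<epsilon> \<le> 1"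
    and alpha_pos: "\<alpha> > 0"
    and hjb: "\<And>x. u x - u2 x + H (u1 x) + W x = m x powr \<alpha> + \<epsilon> * (m x - m2 x)"
    and fp: "\<And>x. m x - m2 x - (h2 (u1 x) * u2 x * m x + h1 (u1 x) * m1 x)
                 = 1 - \<epsilon> * (u x - u2 x)"
begin

lemma periodic_derivatives: "periodic1 u1" "periodic1 m1" "periodic1 w1"
  using periodic periodic1_derivative u_deriv m_deriv W_deriv by blast+

lemma continuous_solution: "continuous_on UNIV u" "continuous_on UNIV u1"
  "continuous_on UNIV m" "continuous_on UNIV m1"
  by (meson DERIV_continuous_on u_deriv u1_deriv m_deriv m1_deriv)+

lemma first_energy_identity:
  "((\<lambda>x. m x * (u1 x * h1 (u1 x) - H (u1 x)) + H (u1 x) - W x * (m x - 1)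
      + (m x - 1) * m x powr \<alpha> + \<epsilon> * ((u x)^2 + (u1 x)^2 + (m x)^2 + (m1 x)^2 - m x))
    has_integral 0) {0..1}"
proof -
  \<comment> \<open>the boundary terms of \<open>(m - 1)\<close> times the first equation minus \<open>u\<close> times the second\<close>
  define P where "P x = m1 x * u x - u1 x * m x + u1 x + h1 (u1 x) * m x * u x
      + \<epsilon> * m1 x * (m x - 1) + \<epsilon> * u1 x * u x" for x
  define P' where "P' x = m2 x * u x + m1 x * u1 x - (u2 x * m x + u1 x * m1 x) + u2 x
      + ((h2 (u1 x) * u2 x * m x + h1 (u1 x) * m1 x) * u x + h1 (u1 x) * m x * u1 x)
      + \<epsilon> * (m2 x * (m x - 1) + m1 x * m1 x) + \<epsilon> * (u2 x * u x + u1 x * u1 x)" for x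
  have "(P has_real_derivative P' x) (at x)" for x
    unfolding P_def[abs_def] P'_def
    by (auto intro!: derivative_eq_intros u_deriv u1_deriv m_deriv m1_deriv
        DERIV_chain2[OF h1_deriv u1_deriv] simp: algebra_simps)
  moreover have "periodic1 P"
    using periodic periodic_derivatives by (simp add: periodic1_def P_def)
  ultimately have "(P' has_integral 0) {0..1}"
    by (rule periodic1_has_integral_derivative[rotated])
  moreover have "P' x = m x * (u1 x * h1 (u1 x) - H (u1 x)) + H (u1 x) - W x * (m x - 1)
      + (m x - 1) * m x powr \<alpha> + \<epsilon> * ((u x)^2 + (u1 x)^2 + (m x)^2 + (m1 x)^2 - m x)" for x
  proof -
    have "P' x = m x * (u1 x * h1 (u1 x) - H (u1 x)) + H (u1 x) - W x * (m x - 1)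
      + (m x - 1) * m x powr \<alpha> + \<epsilon> * ((u x)^2 + (u1 x)^2 + (m x)^2 + (m1 x)^2 - m x)
      + (u x - u2 x + H (u1 x) + W x - (m x powr \<alpha> + \<epsilon> * (m x - m2 x))) * (m x - 1)
      - (m x - m2 x - (h2 (u1 x) * u2 x * m x + h1 (u1 x) * m1 x)
         - (1 - \<epsilon> * (u x - u2 x))) * u x"
      unfolding P'_def by (simp add: algebra_simps power2_eq_square)
    then show ?thesis using hjb[of x] fp[of x] by simp
  qed
  ultimately show ?thesis by (simp cong: has_integral_cong)
qed

lemma first_energy_estimate:
  assumes W_bound: "\<And>x. \<bar>W x\<bar> \<le> K" and H_lower: "\<And>p. - C1 \<le> H p"
    and L_lower: "\<And>p. - D1 \<le> p * h1 p - H p"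
    and B: "\<And>t. t > 0 \<Longrightarrow> - B \<le> t * t powr \<alpha> - t powr \<alpha> - (D1 + K + 2) * t"
  shows "integral {0..1} (\<lambda>x. \<epsilon> * ((u x)^2 + (u1 x)^2 + (m x)^2 + (m1 x)^2) + m x)
    \<le> C1 + K + B"
proof (rule has_integral_le)
  show "((\<lambda>x. \<epsilon> * ((u x)^2 + (u1 x)^2 + (m x)^2 + (m1 x)^2) + m x) has_integral
      integral {0..1} (\<lambda>x. \<epsilon> * ((u x)^2 + (u1 x)^2 + (m x)^2 + (m1 x)^2) + m x)) {0..1}"
    by (intro integrable_integral continuous_on_UNIV_integrable_Icc continuous_intros
        continuous_solution)
  show "((\<lambda>x. m x * (u1 x * h1 (u1 x) - H (u1 x)) + H (u1 x) - W x * (m x - 1)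
      + (m x - 1) * m x powr \<alpha> + \<epsilon> * ((u x)^2 + (u1 x)^2 + (m x)^2 + (m1 x)^2 - m x)
      + (C1 + K + B)) has_integral C1 + K + B) {0..1}"
    using has_integral_add[OF first_energy_identity has_integral_const_real[of "C1 + K + B" 0 1]]
    by simp
  fix x
  have "- D1 * m x \<le> m x * (u1 x * h1 (u1 x) - H (u1 x))"
    using mult_left_mono[OF L_lower[of "u1 x"], of "m x"] m_pos[of x] by (simp add: mult.commute)
  moreover have "W x * m x \<le> K * m x"
    using W_bound[of x] m_pos[of x] by (intro mult_right_mono) (auto simp: abs_le_iff)
  then have "W x * (m x - 1) \<le> K * m x + K"
    using W_bound[of x] by (simp add: algebra_simps abs_le_iff)
  moreover have "\<epsilon> * m x \<le> m x"
    using eps m_pos[of x] by simp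
  ultimately show "\<epsilon> * ((u x)^2 + (u1 x)^2 + (m x)^2 + (m1 x)^2) + m x
    \<le> m x * (u1 x * h1 (u1 x) - H (u1 x)) + H (u1 x) - W x * (m x - 1)
      + (m x - 1) * m x powr \<alpha> + \<epsilon> * ((u x)^2 + (u1 x)^2 + (m x)^2 + (m1 x)^2 - m x)
      + (C1 + K + B)"
    using H_lower[of "u1 x"] B[OF m_pos[of x]] by (simp add: algebra_simps)
qed

lemma second_energy_identity:
  "((\<lambda>x. w2 x * m x + \<alpha> * m x powr (\<alpha> - 1) * (m1 x)^2 + h2 (u1 x) * m x * (u2 x)^2
      + \<epsilon> * ((u1 x)^2 + (u2 x)^2 + (m1 x)^2 + (m2 x)^2)) has_integral 0) {0..1}"
proof -
  \<comment> \<open>the boundary terms of \<open>u_xx\<close> times the second equation minus \<open>m_xx\<close> times the first\<close>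
  define P where "P x = m x * u1 x - u x * m1 x - H (u1 x) * m1 x + w1 x * m x - W x * m1 x
      + m x powr \<alpha> * m1 x + \<epsilon> * m x * m1 x + \<epsilon> * u x * u1 x - u1 x" for x
  define P' where "P' x = m1 x * u1 x + m x * u2 x - (u1 x * m1 x + u x * m2 x)
      - (h1 (u1 x) * u2 x * m1 x + H (u1 x) * m2 x) + (w2 x * m x + w1 x * m1 x)
      - (w1 x * m1 x + W x * m2 x) + (\<alpha> * m x powr (\<alpha> - 1) * m1 x * m1 x + m x powr \<alpha> * m2 x)
      + \<epsilon> * (m1 x * m1 x + m x * m2 x) + \<epsilon> * (u1 x * u1 x + u x * u2 x) - u2 x" for x
  have "(P has_real_derivative P' x) (at x)" for x
    unfolding P_def[abs_def] P'_def
    by (auto intro!: derivative_eq_intros u_deriv u1_deriv m_deriv m1_deriv W_deriv w1_deriv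
        DERIV_chain2[OF H_deriv u1_deriv] simp: algebra_simps m_pos)
  moreover have "periodic1 P"
    using periodic periodic_derivatives by (simp add: periodic1_def P_def)
  ultimately have "(P' has_integral 0) {0..1}"
    by (rule periodic1_has_integral_derivative[rotated])
  moreover have "P' x = w2 x * m x + \<alpha> * m x powr (\<alpha> - 1) * (m1 x)^2 + h2 (u1 x) * m x * (u2 x)^2
      + \<epsilon> * ((u1 x)^2 + (u2 x)^2 + (m1 x)^2 + (m2 x)^2)" for x
  proof -
    have "P' x = w2 x * m x + \<alpha> * m x powr (\<alpha> - 1) * (m1 x)^2 + h2 (u1 x) * m x * (u2 x)^2
      + \<epsilon> * ((u1 x)^2 + (u2 x)^2 + (m1 x)^2 + (m2 x)^2)
      - (u x - u2 x + H (u1 x) + W x - (m x powr \<alpha> + \<epsilon> * (m x - m2 x))) * m2 x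
      + (m x - m2 x - (h2 (u1 x) * u2 x * m x + h1 (u1 x) * m1 x)
         - (1 - \<epsilon> * (u x - u2 x))) * u2 x"
      unfolding P'_def by (simp add: algebra_simps power2_eq_square)
    then show ?thesis using hjb[of x] fp[of x] by simp
  qed
  ultimately show ?thesis by (simp cong: has_integral_cong)
qed

lemma second_energy_estimate:
  assumes w2_bound: "\<And>x. \<bar>w2 x\<bar> \<le> K"
  shows "integral {0..1} (\<lambda>x. \<epsilon> * ((u2 x)^2 + (m2 x)^2)) \<le> K * integral {0..1} m"
proof (rule has_integral_le)
  show "((\<lambda>x. \<epsilon> * ((u2 x)^2 + (m2 x)^2)) has_integral
      integral {0..1} (\<lambda>x. \<epsilon> * ((u2 x)^2 + (m2 x)^2))) {0..1}"
    by (intro integrable_integral continuous_on_UNIV_integrable_Icc continuous_intros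
        u2_cont m2_cont)
  have "m integrable_on {0..1}"
    by (intro continuous_on_UNIV_integrable_Icc continuous_solution)
  then show "((\<lambda>x. w2 x * m x + \<alpha> * m x powr (\<alpha> - 1) * (m1 x)^2 + h2 (u1 x) * m x * (u2 x)^2
      + \<epsilon> * ((u1 x)^2 + (u2 x)^2 + (m1 x)^2 + (m2 x)^2) + K * m x)
      has_integral K * integral {0..1} m) {0..1}"
    using has_integral_add[OF second_energy_identity
        has_integral_mult_right[OF integrable_integral, of m "{0..1}" K]] by simp
  fix x
  have "- K * m x \<le> w2 x * m x"
    using w2_bound[of x] m_pos[of x] mult_right_mono[of "- K" "w2 x" "m x"] by (simp add: abs_le_iff)
  moreover have "0 \<le> \<alpha> * m x powr (\<alpha> - 1) * (m1 x)^2" "0 \<le> h2 (u1 x) * m x * (u2 x)^2"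
    "0 \<le> \<epsilon> * (u1 x)^2" "0 \<le> \<epsilon> * (m1 x)^2"
    using alpha_pos h2_nonneg[of "u1 x"] m_pos[of x] eps by simp_all
  ultimately show "\<epsilon> * ((u2 x)^2 + (m2 x)^2) \<le> w2 x * m x + \<alpha> * m x powr (\<alpha> - 1) * (m1 x)^2
      + h2 (u1 x) * m x * (u2 x)^2 + \<epsilon> * ((u1 x)^2 + (u2 x)^2 + (m1 x)^2 + (m2 x)^2) + K * m x"
    by (simp add: algebra_simps)
qed

lemma energy_bounds:
  assumes W_bound: "\<And>x. \<bar>W x\<bar> \<le> K" and w2_bound: "\<And>x. \<bar>w2 x\<bar> \<le> K"
    and H_lower: "\<And>p. - C1 \<le> H p" and L_lower: "\<And>p. - D1 \<le> p * h1 p - H p"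
    and B: "\<And>t. t > 0 \<Longrightarrow> - B \<le> t * t powr \<alpha> - t powr \<alpha> - (D1 + K + 2) * t"
    and f: "f \<in> {u, u1, u2, m, m1, m2}"
  shows "integral {0..1} (\<lambda>x. (f x)^2) \<le> (1 + K) * (C1 + K + B) / \<epsilon>"
proof -
  define Q where "Q x = \<epsilon> * ((u x)^2 + (u1 x)^2 + (m x)^2 + (m1 x)^2) + m x" for x
  have Q_int: "integral {0..1} Q \<le> C1 + K + B"
    unfolding Q_def by (rule first_energy_estimate[OF W_bound H_lower L_lower B])
  have integrable: "g integrable_on {0..1}" if "continuous_on UNIV g" for g :: "real \<Rightarrow> real"
    using that by (rule continuous_on_UNIV_integrable_Icc)
  have cont: "continuous_on UNIV g" if "g \<in> {u, u1, u2, m, m1, m2}" for g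
    using that continuous_solution u2_cont m2_cont by auto
  have "continuous_on UNIV Q"
    unfolding Q_def[abs_def] by (intro continuous_intros continuous_solution)
  then have le_Q: "integral {0..1} g \<le> integral {0..1} Q"
    if "continuous_on UNIV g" "\<And>x. g x \<le> Q x" for g
    using that by (intro integral_le integrable) auto
  have "m x \<le> Q x" for x
    unfolding Q_def using eps by (simp add: less_imp_le)
  then have "integral {0..1} m \<le> integral {0..1} Q"
    by (intro le_Q continuous_solution)
  moreover have "0 \<le> integral {0..1} m"
    using m_pos by (intro integral_nonneg integrable continuous_solution) (simp add: less_imp_le)
  moreover have "0 \<le> K"
    using W_bound[of 0] by simp
  ultimately have "integral {0..1} m \<le> C1 + K + B" "0 \<le> C1 + K + B" "0 \<le> K"
    using Q_int by linarith+
  then have KM: "K * integral {0..1} m \<le> (1 + K) * (C1 + K + B)"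
    "C1 + K + B \<le> (1 + K) * (C1 + K + B)"
    using mult_left_mono[of "integral {0..1} m" "C1 + K + B" K]
      mult_nonneg_nonneg[of K "C1 + K + B"]
    by (simp_all add: algebra_simps)
  have "\<epsilon> * integral {0..1} (\<lambda>x. (f x)^2) \<le> (1 + K) * (C1 + K + B)"
  proof (cases "f \<in> {u2, m2}")
    case True
    then have "integral {0..1} (\<lambda>x. \<epsilon> * (f x)^2) \<le> integral {0..1} (\<lambda>x. \<epsilon> * ((u2 x)^2 + (m2 x)^2))"
      using eps u2_cont m2_cont by (intro integral_le integrable continuous_intros) auto
    also have "\<dots> \<le> K * integral {0..1} m"
      by (rule second_energy_estimate[OF w2_bound])
    finally show ?thesis using KM by simp
  next
    case False
    have "\<epsilon> * (f x)^2 \<le> Q x" for x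
    proof -
      have "0 \<le> \<epsilon> * (u x)^2" "0 \<le> \<epsilon> * (u1 x)^2" "0 \<le> \<epsilon> * (m x)^2"
        "0 \<le> \<epsilon> * (m1 x)^2" "0 \<le> m x"
        using eps m_pos[of x] by simp_all
      with f False show ?thesis by (auto simp: Q_def distrib_left)
    qed
    with f have "integral {0..1} (\<lambda>x. \<epsilon> * (f x)^2) \<le> integral {0..1} Q"
      by (intro le_Q continuous_intros cont)
    then show ?thesis using KM Q_int by simp
  qed
  then show ?thesis
    using eps by (simp add: field_simps)
qed

lemma solution_bounds:
  assumes W_bound: "\<And>x. \<bar>W x\<bar> \<le> K" and w2_bound: "\<And>x. \<bar>w2 x\<bar> \<le> K"
    and H_lower: "\<And>p. - C1 \<le> H p" and L_lower: "\<And>p. - D1 \<le> p * h1 p - H p"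
    and B: "\<And>t. t > 0 \<Longrightarrow> - B \<le> t * t powr \<alpha> - t powr \<alpha> - (D1 + K + 2) * t"
    and f: "f \<in> {u, u1, m, m1}"
  defines "A \<equiv> (1 + K) * (C1 + K + B) / \<epsilon>"
  shows "\<bar>f x\<bar> \<le> 3 * sqrt A" and "\<bar>f x - f y\<bar> \<le> 3 * sqrt A * sqrt (tdist x y)"
proof -
  have energy: "integral {0..1} (\<lambda>x. (g x)^2) \<le> A" if "g \<in> {u, u1, u2, m, m1, m2}" for g
    unfolding A_def by (rule energy_bounds[OF W_bound w2_bound H_lower L_lower B that])
  have "\<bar>g x\<bar> \<le> 3 * sqrt A \<and> \<bar>g x - g y\<bar> \<le> 3 * sqrt A * sqrt (tdist x y)"
    if "periodic1 g" "\<And>x. (g has_real_derivative g' x) (at x)" "continuous_on UNIV g'"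
      "g \<in> {u, u1, u2, m, m1, m2}" "g' \<in> {u, u1, u2, m, m1, m2}" for g g'
    using periodic1_sobolev_bounds[OF that(1-3) energy[OF that(4)] energy[OF that(5)]] by blast
  from this[OF periodic(1) u_deriv continuous_solution(2)]
    this[OF periodic_derivatives(1) u1_deriv u2_cont]
    this[OF periodic(2) m_deriv continuous_solution(4)]
    this[OF periodic_derivatives(2) m1_deriv m2_cont]
  show "\<bar>f x\<bar> \<le> 3 * sqrt A" and "\<bar>f x - f y\<bar> \<le> 3 * sqrt A * sqrt (tdist x y)"
    using f by auto
qed

end

section \<open>A priori bounds\<close>

lemma scaled_potential_bounds:
  assumes "periodic1 V" "C2 V" "c2norm V \<le> K" "0 \<le> lam" "lam \<le> 1"
  shows "periodic1 (\<lambda>x. lam * V x)" "C2 (\<lambda>x. lam * V x)"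
    "\<bar>lam * V x\<bar> \<le> \<bar>K\<bar>" "\<bar>deriv (deriv (\<lambda>x. lam * V x)) x\<bar> \<le> \<bar>K\<bar>"
proof -
  have scaled: "\<bar>lam * a\<bar> \<le> \<bar>K\<bar>" if "\<bar>a\<bar> \<le> c2norm V" for a
  proof -
    have "\<bar>lam * a\<bar> \<le> 1 * \<bar>a\<bar>"
      unfolding abs_mult using assms by (intro mult_right_mono) auto
    then show ?thesis
      using that assms by linarith
  qed
  show "periodic1 (\<lambda>x. lam * V x)"
    using assms(1) by (simp add: periodic1_def)
  show "C2 (\<lambda>x. lam * V x)" "\<bar>lam * V x\<bar> \<le> \<bar>K\<bar>"
    "\<bar>deriv (deriv (\<lambda>x. lam * V x)) x\<bar> \<le> \<bar>K\<bar>"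
    using scaled abs_le_c2norm[OF assms(1,2)] C2_scale[OF assms(2)] by auto
qed

lemma powr_superlinear_lower_bound:
  fixes \<alpha> A :: real
  assumes "\<alpha> > 0" and "A > 0"
  obtains B where "B \<ge> 0" and "\<And>t. t > 0 \<Longrightarrow> - B \<le> t * t powr \<alpha> - t powr \<alpha> - A * t"
proof
  define R where "R = max 2 ((2 * A) powr (1 / \<alpha>))"
  have "R \<ge> 2" by (simp add: R_def)
  show "A * R + R powr \<alpha> \<ge> 0"
    using \<open>R \<ge> 2\<close> \<open>A > 0\<close> by simp
  fix t :: real
  assume "t > 0"
  show "- (A * R + R powr \<alpha>) \<le> t * t powr \<alpha> - t powr \<alpha> - A * t"
  proof (cases "t \<ge> R")
    case True
    have "2 * A = ((2 * A) powr (1 / \<alpha>)) powr \<alpha>"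
      using assms by (simp add: powr_powr)
    also have "\<dots> \<le> R powr \<alpha>"
      using assms by (intro powr_mono2) (auto simp: R_def)
    also have "\<dots> \<le> t powr \<alpha>"
      using True \<open>R \<ge> 2\<close> assms by (intro powr_mono2) auto
    finally have "(t - 1) * (2 * A) \<le> (t - 1) * t powr \<alpha>"
      using True \<open>R \<ge> 2\<close> by (intro mult_left_mono) auto
    then have "2 * A * t - 2 * A \<le> t * t powr \<alpha> - t powr \<alpha>"
      by (simp add: algebra_simps)
    moreover have "A * 2 \<le> A * t" "0 \<le> A * R" "0 \<le> R powr \<alpha>"
      using True \<open>R \<ge> 2\<close> \<open>A > 0\<close> by simp_all
    ultimately show ?thesis
      by linarith
  next
    case False
    then have "t powr \<alpha> \<le> R powr \<alpha>" "A * t \<le> A * R" "0 \<le> t * t powr \<alpha>"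
      using \<open>t > 0\<close> assms by (auto intro: powr_mono2)
    then show ?thesis by linarith
  qed
qed

lemma solves_P1_bounds:
  fixes H W u m :: "real \<Rightarrow> real"
  assumes H: "C2 H" "convex_on UNIV H" and W: "periodic1 W" "C2 W"
    and eps: "0 < \<epsilon>" "\<epsilon> \<le> 1" and alpha: "\<alpha> > 0"
    and sol: "solves_P1 H W \<alpha> \<epsilon> u m"
    and W_bound: "\<And>x. \<bar>W x\<bar> \<le> K" and W''_bound: "\<And>x. \<bar>deriv (deriv W) x\<bar> \<le> K"
    and H_lower: "\<And>p. - C1 \<le> H p" and L_lower: "\<And>p. - D1 \<le> p * deriv H p - H p"
    and B: "\<And>t. t > 0 \<Longrightarrow> - B \<le> t * t powr \<alpha> - t powr \<alpha> - (D1 + K + 2) * t"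
    and f: "f \<in> {u, deriv u, m, deriv m}"
  defines "A \<equiv> (1 + K) * (C1 + K + B) / \<epsilon>"
  shows "\<bar>f x\<bar> \<le> 3 * sqrt A" and "\<bar>f x - f y\<bar> \<le> 3 * sqrt A * sqrt (tdist x y)"
proof -
  obtain h1 h2 where dH: "\<And>p. (H has_real_derivative h1 p) (at p)"
    "\<And>p. (h1 has_real_derivative h2 p) (at p)" and eH: "deriv H = h1"
    using C2_obtain_derivatives[OF H(1)] by metis
  obtain w1 w2 where dW: "\<And>x. (W has_real_derivative w1 x) (at x)"
    "\<And>x. (w1 has_real_derivative w2 x) (at x)" and eW: "deriv W = w1" "deriv w1 = w2"
    using C2_obtain_derivatives[OF W(2)] by metis
  have "C2 u" "C2 m" and pum: "periodic1 u" "periodic1 m" and m_pos: "\<And>x. m x > 0"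
    using sol by (auto simp: solves_P1_def)
  obtain u1 u2 where du: "\<And>x. (u has_real_derivative u1 x) (at x)"
    "\<And>x. (u1 has_real_derivative u2 x) (at x)" "continuous_on UNIV u2"
    and eu: "deriv u = u1" "deriv u1 = u2"
    using C2_obtain_derivatives[OF \<open>C2 u\<close>] by metis
  obtain m1 m2 where dm: "\<And>x. (m has_real_derivative m1 x) (at x)"
    "\<And>x. (m1 has_real_derivative m2 x) (at x)" "continuous_on UNIV m2"
    and em: "deriv m = m1" "deriv m1 = m2"
    using C2_obtain_derivatives[OF \<open>C2 m\<close>] by metis
  have "((\<lambda>y. h1 (u1 y) * m y) has_real_derivative h2 (u1 x) * u2 x * m x + h1 (u1 x) * m1 x)
      (at x)" for x
    using DERIV_mult[OF DERIV_chain2[OF dH(2) du(2)] dm(1), of x] by (simp add: mult.commute)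
  then have "deriv (\<lambda>y. h1 (u1 y) * m y) x = h2 (u1 x) * u2 x * m x + h1 (u1 x) * m1 x" for x
    by (rule DERIV_imp_deriv)
  then interpret P1_solution H h1 h2 W w1 w2 u u1 u2 m m1 m2 \<alpha> \<epsilon>
    using dH dW du dm pum W(1) m_pos eps alpha sol
      convex_imp_second_derivative_nonneg[OF H(2) dH]
    by unfold_locales (auto simp: solves_P1_def eH eu em)
  have "f \<in> {u, u1, m, m1}"
    using f by (simp add: eu em)
  then show "\<bar>f x\<bar> \<le> 3 * sqrt A" and "\<bar>f x - f y\<bar> \<le> 3 * sqrt A * sqrt (tdist x y)"
    using solution_bounds[OF W_bound _ H_lower _ B] W''_bound L_lower
    unfolding A_def eW eH by auto
qed

theorem mainTheorem6:
  fixes \<alpha> \<gamma> C\<^sub>1 C\<^sub>2 C\<^sub>3 D\<^sub>1 D\<^sub>2 D\<^sub>3 K :: real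
  assumes "\<alpha> > 0" and "\<gamma> > 1"
    and "C\<^sub>1 > 0" and "C\<^sub>2 > 0" and "C\<^sub>3 > 0"
    and "D\<^sub>1 > 0" and "D\<^sub>2 > 0" and "D\<^sub>3 > 0"
  shows "\<exists>C>0. \<forall>H V :: real \<Rightarrow> real.
     C2 H \<and>
     (\<forall>p. - C\<^sub>1 + C\<^sub>2 * \<bar>p\<bar> powr \<gamma> \<le> H p \<and> H p \<le> C\<^sub>1 + C\<^sub>3 * \<bar>p\<bar> powr \<gamma>) \<and>
     (\<forall>p. - D\<^sub>1 + D\<^sub>2 * \<bar>p\<bar> powr \<gamma> \<le> p * deriv H p - H p \<and>
          p * deriv H p - H p \<le> D\<^sub>1 + D\<^sub>3 * \<bar>p\<bar> powr \<gamma>) \<and>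
     periodic1 V \<and> C2 V \<and> convex_on UNIV H \<and>
     c2norm V \<le> K \<longrightarrow>
     (\<forall>\<epsilon> lam u m. 0 < \<epsilon> \<and> \<epsilon> \<le> 1 \<and> 0 \<le> lam \<and> lam \<le> 1 \<and>
        solves_P1 H (\<lambda>x. lam * V x) \<alpha> \<epsilon> u m \<longrightarrow>
        (\<forall>w \<in> {u, deriv u, m, deriv m}.
           (\<forall>x. \<bar>w x\<bar> \<le> C / sqrt \<epsilon>) \<and>
           (\<forall>x y. \<bar>w x - w y\<bar> \<le> C / sqrt \<epsilon> * sqrt (tdist x y))))"
proof -
  have "D\<^sub>1 + \<bar>K\<bar> + 2 > 0"
    using \<open>D\<^sub>1 > 0\<close> by simp
  then obtain B where "B \<ge> 0"
    and B: "\<And>t. t > 0 \<Longrightarrow> - B \<le> t * t powr \<alpha> - t powr \<alpha> - (D\<^sub>1 + \<bar>K\<bar> + 2) * t"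
    using powr_superlinear_lower_bound[OF \<open>\<alpha> > 0\<close>] by blast
  define N where "N = (1 + \<bar>K\<bar>) * (C\<^sub>1 + \<bar>K\<bar> + B)"
  have "N > 0"
    using \<open>B \<ge> 0\<close> \<open>C\<^sub>1 > 0\<close> by (simp add: N_def add_pos_nonneg)
  show ?thesis
  proof (intro exI[of _ "3 * sqrt N"] conjI allI impI ballI)
    show "0 < 3 * sqrt N" using \<open>N > 0\<close> by simp
    fix H V u m w :: "real \<Rightarrow> real" and \<epsilon> lam x y :: real
    assume hyp: "C2 H \<and> (\<forall>p. - C\<^sub>1 + C\<^sub>2 * \<bar>p\<bar> powr \<gamma> \<le> H p \<and> H p \<le> C\<^sub>1 + C\<^sub>3 * \<bar>p\<bar> powr \<gamma>) \<and>
      (\<forall>p. - D\<^sub>1 + D\<^sub>2 * \<bar>p\<bar> powr \<gamma> \<le> p * deriv H p - H p \<and>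
          p * deriv H p - H p \<le> D\<^sub>1 + D\<^sub>3 * \<bar>p\<bar> powr \<gamma>) \<and>
      periodic1 V \<and> C2 V \<and> convex_on UNIV H \<and> c2norm V \<le> K"
      and sol: "0 < \<epsilon> \<and> \<epsilon> \<le> 1 \<and> 0 \<le> lam \<and> lam \<le> 1 \<and> solves_P1 H (\<lambda>x. lam * V x) \<alpha> \<epsilon> u m"
      and w: "w \<in> {u, deriv u, m, deriv m}"
    have H_lower: "- C\<^sub>1 \<le> H p" and L_lower: "- D\<^sub>1 \<le> p * deriv H p - H p" for p
      using hyp assms by (smt (verit) mult_nonneg_nonneg powr_ge_zero abs_ge_zero)+
    from solves_P1_bounds[of H "\<lambda>x. lam * V x" \<epsilon> \<alpha> u m "\<bar>K\<bar>" C\<^sub>1 D\<^sub>1 B w,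
        folded N_def, unfolded real_sqrt_divide]
    show "\<bar>w x\<bar> \<le> 3 * sqrt N / sqrt \<epsilon>"
      and "\<bar>w x - w y\<bar> \<le> 3 * sqrt N / sqrt \<epsilon> * sqrt (tdist x y)"
      using hyp sol scaled_potential_bounds[of V K lam] H_lower L_lower B w \<open>\<alpha> > 0\<close> by auto
  qed
qed

end
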